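(* Assume (A1). For all $\epsilon>0$ small enough there exists a constant $C_1<\infty$ such that for all $x\in\mathbb{Z}^2$ and all integers $k>\|x\|_\infty$, \[ \mathbb{P}_\epsilon\bigl(m_A(x)=k\bigr)\le\frac{C_1}{(k-\|x\|_\infty)^{\alpha-1}}. \]
   Context: Couplings $J_{x,y}=J_{x-y}$ with $J_x=J_{-x}\ge0$, $\sum_{x\in\mathbb{Z}^2}J_x=1$; (A1): there exist $\alpha>4$, $J\ge0$ with $J_x\le J\|x\|_1^{-\alpha}$ for $x\ne0$. For $\epsilon\in(0,1]$, $\mathbb{P}_\epsilon$ is independent Bernoulli bond percolation on the set of unordered pairs $\{x,y\}$ of distinct vertices of $\mathbb{Z}^2$, each open with probability $\epsilon J_{x,y}$; $A$ is the set of open edges and $u\leftrightarrow v$ means $u,v$ are joined by a finite chain of open edges (or $u=v$). $m_A(u)=\sup\{\|v\|_\infty: v\leftrightarrow u\}$. *)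

theory Defs
  imports "HOL-Probability.Probability"
begin

type_synonym vertex = "int \<times> int"
type_synonym edge = "vertex set"

definition linf :: "vertex \<Rightarrow> int" where
  "linf v = max \<bar>fst v\<bar> \<bar>snd v\<bar>"

definition l1 :: "vertex \<Rightarrow> int" where
  "l1 v = \<bar>fst v\<bar> + \<bar>snd v\<bar>"

definition edges :: "edge set" where
  "edges = {{x, y} | x y. x \<noteq> y}"

text \<open>Coupling of an edge {x,y}: J_{x,y} = J(x - y) (well defined by symmetry of J).\<close>
definition edgeJ :: "(vertex \<Rightarrow> real) \<Rightarrow> edge \<Rightarrow> real" where
  "edgeJ J e = (THE r. \<exists>x y. e = {x, y} \<and> x \<noteq> y \<and> r = J (x - y))"

definition perc :: "(vertex \<Rightarrow> real) \<Rightarrow> real \<Rightarrow> (edge \<Rightarrow> bool) measure" where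
  "perc J \<epsilon> = PiM edges (\<lambda>e. measure_pmf (bernoulli_pmf (\<epsilon> * edgeJ J e)))"

definition connected_in :: "(edge \<Rightarrow> bool) \<Rightarrow> vertex \<Rightarrow> vertex \<Rightarrow> bool" where
  "connected_in A u v \<longleftrightarrow>
     (u, v) \<in> {(a, b). {a, b} \<in> edges \<and> A {a, b}}\<^sup>*"

definition mA :: "(edge \<Rightarrow> bool) \<Rightarrow> vertex \<Rightarrow> enat" where
  "mA A u = Sup ((\<lambda>v. enat (nat (linf v))) ` {v. connected_in A v u})"

end

theory Submission
  imports Defs "HOL-Library.Transitive_Closure_Table"
begin

text \<open>If \<open>m\<^sub>A(x) = k\<close>, some vertex \<open>v\<close> with \<open>\<parallel>v\<parallel>\<^sub>\<infinity> = k\<close> is joined to \<open>x\<close> by a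
  self-avoiding open path. By independence such a path is open with probability the product of its
  edge probabilities, so a union bound dominates \<open>P(m\<^sub>A(x) = k)\<close> by the sum over the sphere
  \<open>\<parallel>v\<parallel>\<^sub>\<infinity> = k\<close> of the Green function \<open>\<Sum>\<^sub>n (\<epsilon>J)\<^sup>*\<^sup>n(x - v)\<close>.
  The decay \<open>J(z) \<le> Jc \<langle>z\<rangle>\<^sup>-\<^sup>\<alpha>\<close>, with \<open>\<langle>z\<rangle> = max 1 \<parallel>z\<parallel>\<^sub>1\<close>, survives convolution:
  \<open>(\<epsilon>J)\<^sup>*\<^sup>n(z) \<le> n Jc (2\<^sup>\<alpha>\<epsilon>)\<^sup>n \<langle>z\<rangle>\<^sup>-\<^sup>\<alpha>\<close>,
  because one of the two factors of a convolution at \<open>z\<close> is evaluated at distance at least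
  \<open>\<langle>z\<rangle>/2\<close>. For \<open>2\<^sup>\<alpha>\<epsilon> \<le> 1/4\<close> the Green function is therefore at most \<open>Jc \<langle>x - v\<rangle>\<^sup>-\<^sup>\<alpha>\<close>,
  and summing this along the four sides of the sphere, all at distance at least
  \<open>k - \<parallel>x\<parallel>\<^sub>\<infinity>\<close> from \<open>x\<close>, gives \<open>O((k - \<parallel>x\<parallel>\<^sub>\<infinity>)\<^sup>1\<^sup>-\<^sup>\<alpha>)\<close>.\<close>

definition nn_sum :: "('a \<Rightarrow> ennreal) \<Rightarrow> ennreal" where
  "nn_sum f = (\<integral>\<^sup>+z. f z \<partial>count_space UNIV)"

lemma nn_sum_mono: "(\<And>z. f z \<le> g z) \<Longrightarrow> nn_sum f \<le> nn_sum g"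
  unfolding nn_sum_def by (intro nn_integral_mono) auto

lemma nn_sum_cmult: "nn_sum (\<lambda>z. c * f z) = c * nn_sum f"
  unfolding nn_sum_def by (rule nn_integral_cmult) auto

lemma nn_sum_add: "nn_sum (\<lambda>z. f z + g z) = nn_sum f + nn_sum g"
  unfolding nn_sum_def by (rule nn_integral_add) auto

lemma nn_sum_single: "(\<And>z. z \<noteq> j \<Longrightarrow> f z = 0) \<Longrightarrow> nn_sum f = f j"
  unfolding nn_sum_def by (subst nn_integral_count_space'[where A="{j}"]) auto

lemma nn_sum_ge: "f j \<le> nn_sum f"
proof -
  have "nn_sum (\<lambda>z. f j * indicator {j} z) \<le> nn_sum f"
    by (intro nn_sum_mono) (auto split: split_indicator)
  then show ?thesis by (subst (asm) nn_sum_single[of j]) auto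
qed

lemma nn_sum_indicator: "nn_sum (\<lambda>z. f z * indicator I z) = (\<integral>\<^sup>+z. f z \<partial>count_space I)"
  unfolding nn_sum_def by (simp add: nn_integral_count_space_indicator)

lemma nn_sum_swap:
  fixes f :: "'a::countable \<Rightarrow> 'b::countable \<Rightarrow> ennreal"
  shows "nn_sum (\<lambda>x. nn_sum (\<lambda>y. f x y)) = nn_sum (\<lambda>y. nn_sum (\<lambda>x. f x y))"
  unfolding nn_sum_def by (rule nn_integral_count_space_nn_integral) auto

lemma nn_sum_pair:
  fixes f :: "'a::countable \<times> 'b::countable \<Rightarrow> ennreal"
  shows "nn_sum f = nn_sum (\<lambda>a. nn_sum (\<lambda>b. f (a, b)))"
  unfolding nn_sum_def by (rule nn_integral_fst_count_space[symmetric])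

lemma nn_sum_suminf: "nn_sum (\<lambda>z. \<Sum>n. f n z) = (\<Sum>n. nn_sum (f n))"
  unfolding nn_sum_def by (rule nn_integral_suminf) auto

lemma nn_sum_bij: "bij g \<Longrightarrow> nn_sum (\<lambda>x. f (g x)) = nn_sum f"
  unfolding nn_sum_def using nn_integral_bij_count_space by fastforce

lemma nn_sum_shift:
  fixes f :: "'a::ab_group_add \<Rightarrow> ennreal"
  shows "nn_sum (\<lambda>z. f (z + a)) = nn_sum f"
  by (rule nn_sum_bij) (metis bij_plus_right)

lemma nn_sum_reflect:
  fixes f :: "'a::ab_group_add \<Rightarrow> ennreal"
  shows "nn_sum (\<lambda>z. f (a - z)) = nn_sum f"
  by (rule nn_sum_bij, rule bij_betwI[where g="\<lambda>z. a - z"]) auto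

lemma nn_sum_Cons:
  fixes F :: "'a::countable list \<Rightarrow> ennreal"
  assumes "F [] = 0"
  shows "nn_sum F = nn_sum (\<lambda>y. nn_sum (\<lambda>ys. F (y # ys)))"
proof -
  have "bij_betw (\<lambda>p. fst p # snd p) (UNIV :: ('a \<times> 'a list) set) (UNIV - {[]})"
    by (rule bij_betwI[where g="\<lambda>xs. (hd xs, tl xs)"]) auto
  then have "nn_sum (\<lambda>p. F (fst p # snd p)) = (\<integral>\<^sup>+xs. F xs \<partial>count_space (UNIV - {[]}))"
    unfolding nn_sum_def by (rule nn_integral_bij_count_space)
  also have "\<dots> = nn_sum F"
    using assms unfolding nn_sum_indicator[symmetric]
    by (intro arg_cong[where f=nn_sum]) (auto split: split_indicator)
  finally show ?thesis by (simp add: nn_sum_pair)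
qed

lemma nn_sum_fst_line:
  fixes g :: "'b::countable \<Rightarrow> ennreal"
  shows "nn_sum (\<lambda>v::'a::countable \<times> 'b. if fst v = c then g (snd v) else 0) = nn_sum g"
  by (subst nn_sum_pair, subst nn_sum_single[of c]) (auto simp: nn_sum_def)

lemma nn_sum_snd_line:
  fixes g :: "'a::countable \<Rightarrow> ennreal"
  shows "nn_sum (\<lambda>v::'a \<times> 'b::countable. if snd v = c then g (fst v) else 0) = nn_sum g"
  by (subst nn_sum_pair, rule arg_cong[where f=nn_sum], rule ext, subst nn_sum_single[of c]) auto

lemma nn_sum_has_sum:
  fixes f :: "'a::countable \<Rightarrow> real"
  assumes "\<And>x. f x \<ge> 0" "(f has_sum s) UNIV"
  shows "nn_sum (\<lambda>z. ennreal (f z)) = ennreal s"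
proof -
  have "Infinite_Sum.abs_summable_on f UNIV"
    using assms(2) summable_on_iff_abs_summable_on_real has_sum_imp_summable by blast
  then have sf: "Infinite_Set_Sum.abs_summable_on f UNIV" using abs_summable_equivalent by blast
  have "nn_sum (\<lambda>z. ennreal (f z)) = ennreal (infsetsum f UNIV)"
    unfolding nn_sum_def by (rule nn_integral_conv_infsetsum[OF sf]) (use assms in auto)
  also have "infsetsum f UNIV = s"
    using infsetsum_infsum[OF sf] infsumI[OF assms(2)] by simp
  finally show ?thesis .
qed

lemma has_sum_term_le:
  fixes f :: "'a::countable \<Rightarrow> real"
  assumes "\<And>x. f x \<ge> 0" "(f has_sum s) UNIV"
  shows "f z \<le> s"
proof -
  have "ennreal (f z) \<le> ennreal s"
    using nn_sum_ge[of "\<lambda>z. ennreal (f z)" z] nn_sum_has_sum[OF assms] by simp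
  moreover have "s \<ge> 0" using has_sum_nonneg[OF assms(2)] assms(1) by blast
  ultimately show ?thesis by simp
qed

lemma nn_integral_count_space_ge: "j \<in> I \<Longrightarrow> f j \<le> (\<integral>\<^sup>+i. f i \<partial>count_space I)"
  using nn_sum_ge[of "\<lambda>i. f i * indicator I i" j] by (simp add: nn_sum_indicator)

lemma emeasure_UN_countable_le:
  assumes X: "\<And>i. i \<in> I \<Longrightarrow> X i \<in> sets M" and I: "countable I"
  shows "emeasure M (\<Union>(X ` I)) \<le> (\<integral>\<^sup>+i. emeasure M (X i) \<partial>count_space I)"
proof -
  have "indicator (\<Union>(X ` I)) x \<le> (\<integral>\<^sup>+i. indicator (X i) x \<partial>count_space I)" for x
  proof (cases "x \<in> \<Union>(X ` I)")
    case True
    then obtain j where "j \<in> I" "x \<in> X j" by auto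
    then show ?thesis
      using nn_integral_count_space_ge[of j I "\<lambda>i. indicator (X i) x"] True by simp
  qed simp
  then have "emeasure M (\<Union>(X ` I)) \<le> (\<integral>\<^sup>+x. \<integral>\<^sup>+i. indicator (X i) x \<partial>count_space I \<partial>M)"
    using X I by (subst nn_integral_indicator[symmetric]) (auto intro!: nn_integral_mono)
  also have "\<dots> = (\<integral>\<^sup>+i. \<integral>\<^sup>+x. indicator (X i) x \<partial>M \<partial>count_space I)"
    using X by (intro nn_integral_count_space_nn_integral I) auto
  also have "\<dots> = (\<integral>\<^sup>+i. emeasure M (X i) \<partial>count_space I)"
    using X by (intro nn_integral_cong) auto
  finally show ?thesis .
qed
lemma powr_decrement_ge:
  fixes t \<alpha> :: real
  assumes t: "t > 0" and al: "\<alpha> > 1"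
  shows "(\<alpha> - 1) * (t + 1) powr (-\<alpha>) \<le> t powr (1 - \<alpha>) - (t + 1) powr (1 - \<alpha>)"
proof -
  have "\<exists>z. t < z \<and> z < t + 1 \<and>
      (t + 1) powr (1 - \<alpha>) - t powr (1 - \<alpha>) = (t + 1 - t) * ((1 - \<alpha>) * z powr (1 - \<alpha> - 1))"
    using t by (intro MVT2 has_real_derivative_powr) auto
  then obtain z where z: "t < z" "z < t + 1"
    and eq: "t powr (1 - \<alpha>) - (t + 1) powr (1 - \<alpha>) = (\<alpha> - 1) * z powr (- \<alpha>)"
    by (auto simp: algebra_simps)
  have "(t + 1) powr (-\<alpha>) \<le> z powr (-\<alpha>)"
    using z t al by (intro powr_mono2') auto
  then show ?thesis using al eq by simp
qed

lemma sum_powr_shift_telescope: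
  fixes d \<alpha> :: real
  assumes d: "d > 0" and al: "\<alpha> > 1"
  shows "(\<Sum>n<Suc N. (d + real n) powr (-\<alpha>)) + (d + real N) powr (1 - \<alpha>) / (\<alpha> - 1)
     \<le> d powr (-\<alpha>) + d powr (1 - \<alpha>) / (\<alpha> - 1)"
proof (induction N)
  case (Suc N)
  have "(\<alpha> - 1) * (d + real (Suc N)) powr (-\<alpha>)
      \<le> (d + real N) powr (1 - \<alpha>) - (d + real (Suc N)) powr (1 - \<alpha>)"
    using powr_decrement_ge[of "d + real N" \<alpha>] d al by (simp add: algebra_simps)
  then have "(d + real (Suc N)) powr (-\<alpha>)
      \<le> ((d + real N) powr (1 - \<alpha>) - (d + real (Suc N)) powr (1 - \<alpha>)) / (\<alpha> - 1)"
    using al by (simp add: pos_le_divide_eq mult.commute)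
  then show ?case using Suc.IH unfolding diff_divide_distrib by simp
qed simp

lemma suminf_powr_shift_le:
  fixes d \<alpha> :: real
  assumes d: "d \<ge> 1" and al: "\<alpha> > 1"
  shows "(\<Sum>n. ennreal ((d + real n) powr (-\<alpha>))) \<le> ennreal (\<alpha> / (\<alpha> - 1) * d powr (1 - \<alpha>))"
proof -
  have partial: "(\<Sum>n<N. (d + real n) powr (-\<alpha>)) \<le> \<alpha> / (\<alpha> - 1) * d powr (1 - \<alpha>)" for N
  proof -
    have "(\<Sum>n<N. (d + real n) powr (-\<alpha>)) \<le> (\<Sum>n<Suc N. (d + real n) powr (-\<alpha>))"
      by simp
    also have "\<dots> \<le> d powr (-\<alpha>) + d powr (1 - \<alpha>) / (\<alpha> - 1)"
    proof -
      have "(d + real N) powr (1 - \<alpha>) / (\<alpha> - 1) \<ge> 0" using al by simp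
      then show ?thesis using sum_powr_shift_telescope[of d \<alpha> N] d al by linarith
    qed
    also have "\<dots> \<le> d powr (1 - \<alpha>) + d powr (1 - \<alpha>) / (\<alpha> - 1)"
      using d by (simp add: powr_mono)
    also have "\<dots> = \<alpha> / (\<alpha> - 1) * d powr (1 - \<alpha>)"
      using al by (simp add: field_simps)
    finally show ?thesis .
  qed
  have s: "summable (\<lambda>n. (d + real n) powr (-\<alpha>))"
    by (rule summableI_nonneg_bounded[OF _ partial]) simp
  have "(\<Sum>n. ennreal ((d + real n) powr (-\<alpha>))) = ennreal (\<Sum>n. (d + real n) powr (-\<alpha>))"
    by (rule suminf_ennreal2[OF _ s]) simp
  also have "\<dots> \<le> ennreal (\<alpha> / (\<alpha> - 1) * d powr (1 - \<alpha>))"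
    by (intro ennreal_leI suminf_le_const[OF s partial])
  finally show ?thesis .
qed

lemma nn_sum_int_powr_le:
  fixes d \<alpha> :: real
  assumes d: "d \<ge> 1" and al: "\<alpha> > 1"
  shows "nn_sum (\<lambda>t::int. ennreal ((d + real_of_int \<bar>t\<bar>) powr (-\<alpha>)))
     \<le> ennreal (2 * \<alpha> / (\<alpha> - 1) * d powr (1 - \<alpha>))"
proof -
  define h where "h t = (if t \<ge> 0 then ennreal ((d + t) powr (-\<alpha>)) else 0)" for t :: int
  have "bij_betw int UNIV {0::int..}"
    by (rule bij_betwI[where g=nat]) auto
  then have "(\<integral>\<^sup>+t. h t \<partial>count_space {0::int..}) = (\<integral>\<^sup>+n. h (int n) \<partial>count_space UNIV)"
    by (rule nn_integral_bij_count_space[symmetric])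
  moreover have "nn_sum h = (\<integral>\<^sup>+t. h t \<partial>count_space {0::int..})"
    unfolding nn_sum_indicator[symmetric] h_def
    by (intro arg_cong[where f=nn_sum]) (auto split: split_indicator)
  ultimately have "nn_sum h = (\<Sum>n. ennreal ((d + real n) powr (-\<alpha>)))"
    by (simp add: nn_integral_count_space_nat h_def)
  also have "\<dots> \<le> ennreal (\<alpha> / (\<alpha> - 1) * d powr (1 - \<alpha>))"
    by (rule suminf_powr_shift_le[OF d al])
  finally have h_le: "nn_sum h \<le> ennreal (\<alpha> / (\<alpha> - 1) * d powr (1 - \<alpha>))" .
  have "nn_sum (\<lambda>t::int. ennreal ((d + real_of_int \<bar>t\<bar>) powr (-\<alpha>))) \<le> nn_sum (\<lambda>t. h t + h (0 - t))"
    by (intro nn_sum_mono) (auto simp: h_def)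
  also have "\<dots> = nn_sum h + nn_sum h"
    by (simp only: nn_sum_add nn_sum_reflect)
  also have "\<dots> \<le> ennreal (\<alpha> / (\<alpha> - 1) * d powr (1 - \<alpha>)) + ennreal (\<alpha> / (\<alpha> - 1) * d powr (1 - \<alpha>))"
    by (intro add_mono h_le)
  also have "\<dots> = ennreal (2 * \<alpha> / (\<alpha> - 1) * d powr (1 - \<alpha>))"
    using al by (simp add: ennreal_plus[symmetric] del: ennreal_plus)
  finally show ?thesis .
qed

definition bracket :: "int \<times> int \<Rightarrow> real" where
  "bracket z = max 1 (real_of_int (l1 z))"

lemma bracket_ge_1: "bracket z \<ge> 1"
  unfolding bracket_def by simp

lemma bracket_ge_l1: "real_of_int (l1 z) \<le> bracket z"
  unfolding bracket_def by simp

lemma l1_ge_1: "z \<noteq> 0 \<Longrightarrow> l1 z \<ge> 1"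
  unfolding l1_def by (cases z) (auto simp: zero_prod_def)

lemma bracket_eq_l1: "z \<noteq> 0 \<Longrightarrow> bracket z = real_of_int (l1 z)"
  using l1_ge_1 unfolding bracket_def by fastforce

lemma bracket_triangle: "bracket z \<le> 2 * max (bracket u) (bracket (z - u))"
proof -
  have "l1 z \<le> l1 u + l1 (z - u)"
    unfolding l1_def by (cases z; cases u) auto
  then show ?thesis unfolding bracket_def by auto
qed

lemma bracket_powr_le_half:
  assumes "\<alpha> \<ge> 0" and "bracket z \<le> 2 * bracket u"
  shows "bracket u powr (-\<alpha>) \<le> 2 powr \<alpha> * bracket z powr (-\<alpha>)"
proof -
  have pos: "bracket z > 0" "bracket u > 0"
    using bracket_ge_1[of z] bracket_ge_1[of u] by auto
  have "bracket u powr (-\<alpha>) \<le> (bracket z / 2) powr (-\<alpha>)"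
    using pos assms by (intro powr_mono2') auto
  also have "\<dots> = 2 powr \<alpha> * bracket z powr (-\<alpha>)"
    using pos by (simp add: powr_divide powr_minus divide_simps)
  finally show ?thesis .
qed

lemma bracket_powr_le_line:
  assumes "d \<ge> 1" "\<alpha> \<ge> 0" "d \<le> real_of_int \<bar>a\<bar>"
  shows "bracket (a, b) powr (-\<alpha>) \<le> (d + real_of_int \<bar>b\<bar>) powr (-\<alpha>)"
    and "bracket (b, a) powr (-\<alpha>) \<le> (d + real_of_int \<bar>b\<bar>) powr (-\<alpha>)"
  using assms bracket_ge_l1[of "(a, b)"] bracket_ge_l1[of "(b, a)"]
  by (auto simp: l1_def intro!: powr_mono2')

lemma nn_sum_sphere_le:
  fixes F :: "int \<times> int \<Rightarrow> ennreal" and h :: "int \<Rightarrow> ennreal"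
  assumes fst_side: "\<And>v. linf v = k \<Longrightarrow> \<bar>fst v\<bar> = k \<Longrightarrow> F v \<le> h (snd v - b)"
    and snd_side: "\<And>v. linf v = k \<Longrightarrow> \<bar>snd v\<bar> = k \<Longrightarrow> F v \<le> h (fst v - a)"
  shows "nn_sum (\<lambda>v. if linf v = k then F v else 0) \<le> 4 * nn_sum h"
proof -
  define sides_fst where "sides_fst v =
      (if fst v = k then h (snd v - b) else 0) + (if fst v = -k then h (snd v - b) else 0)" for v
  define sides_snd where "sides_snd v =
      (if snd v = k then h (fst v - a) else 0) + (if snd v = -k then h (fst v - a) else 0)" for v
  have "(if linf v = k then F v else 0) \<le> sides_fst v + sides_snd v" for v
  proof (cases "linf v = k")
    case True
    then consider "\<bar>fst v\<bar> = k" | "\<bar>snd v\<bar> = k" unfolding linf_def by linarith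
    then show ?thesis
    proof cases
      case 1
      then have "h (snd v - b) \<le> sides_fst v"
        by (cases "fst v = k") (auto simp: sides_fst_def)
      with fst_side[OF True 1] have "F v \<le> sides_fst v" by (rule order_trans)
      then have "F v \<le> sides_fst v + sides_snd v" by (rule add_increasing2[OF zero_le])
      then show ?thesis using True by simp
    next
      case 2
      then have "h (fst v - a) \<le> sides_snd v"
        by (cases "snd v = k") (auto simp: sides_snd_def)
      with snd_side[OF True 2] have "F v \<le> sides_snd v" by (rule order_trans)
      then have "F v \<le> sides_fst v + sides_snd v" by (rule add_increasing[OF zero_le])
      then show ?thesis using True by simp
    qed
  qed simp
  then have "nn_sum (\<lambda>v. if linf v = k then F v else 0) \<le> nn_sum (\<lambda>v. sides_fst v + sides_snd v)"
    by (rule nn_sum_mono)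
  also have "\<dots> = 4 * nn_sum h"
  proof -
    have lines: "nn_sum (\<lambda>v. if fst v = c then h (snd v - b) else 0) = nn_sum h"
      "nn_sum (\<lambda>v. if snd v = c then h (fst v - a) else 0) = nn_sum h" for c :: int
      using nn_sum_fst_line[of c "\<lambda>t. h (t - b)"] nn_sum_snd_line[of c "\<lambda>t. h (t - a)"]
        nn_sum_shift[of h "- b"] nn_sum_shift[of h "- a"] by simp_all
    have "y + y + (y + y) = 4 * (y :: ennreal)" for y
      by (simp add: mult_2[symmetric] distrib_right[symmetric])
    then show ?thesis
      unfolding sides_fst_def sides_snd_def nn_sum_add lines .
  qed
  finally show ?thesis .
qed

lemma nn_sum_sphere_bracket_powr_le:
  fixes x :: "int \<times> int" and k :: int and \<alpha> :: real
  assumes k: "linf x < k" and al: "\<alpha> > 1"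
  shows "nn_sum (\<lambda>v. if linf v = k then ennreal (bracket (x - v) powr (-\<alpha>)) else 0)
     \<le> ennreal (8 * \<alpha> / (\<alpha> - 1) * real_of_int (k - linf x) powr (1 - \<alpha>))"
proof -
  define d where "d = real_of_int (k - linf x)"
  have d: "d \<ge> 1" using k by (simp add: d_def)
  have x: "\<bar>fst x\<bar> \<le> linf x" "\<bar>snd x\<bar> \<le> linf x" by (auto simp: linf_def)
  have "nn_sum (\<lambda>v. if linf v = k then ennreal (bracket (x - v) powr (-\<alpha>)) else 0)
      \<le> 4 * nn_sum (\<lambda>t. ennreal ((d + real_of_int \<bar>t\<bar>) powr (-\<alpha>)))"
  proof (rule nn_sum_sphere_le[where a="fst x" and b="snd x"])
    fix v :: "int \<times> int"
    have xv: "x - v = (fst x - fst v, snd x - snd v)" by (simp add: prod_eq_iff)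
    show "ennreal (bracket (x - v) powr (-\<alpha>)) \<le> ennreal ((d + real_of_int \<bar>snd v - snd x\<bar>) powr (-\<alpha>))"
      if "\<bar>fst v\<bar> = k"
      using that x bracket_powr_le_line(1)[OF d, of \<alpha> "fst x - fst v" "snd x - snd v"] al
      by (intro ennreal_leI) (auto simp: xv d_def abs_minus_commute)
    show "ennreal (bracket (x - v) powr (-\<alpha>)) \<le> ennreal ((d + real_of_int \<bar>fst v - fst x\<bar>) powr (-\<alpha>))"
      if "\<bar>snd v\<bar> = k"
      using that x bracket_powr_le_line(2)[OF d, of \<alpha> "snd x - snd v" "fst x - fst v"] al
      by (intro ennreal_leI) (auto simp: xv d_def abs_minus_commute)
  qed
  also have "\<dots> \<le> 4 * ennreal (2 * \<alpha> / (\<alpha> - 1) * d powr (1 - \<alpha>))"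
    by (intro mult_left_mono nn_sum_int_powr_le d al) simp
  also have "\<dots> = ennreal (4 * (2 * \<alpha> / (\<alpha> - 1) * d powr (1 - \<alpha>)))"
    by (subst ennreal_mult') simp_all
  finally show ?thesis by (simp add: d_def mult.assoc)
qed

definition step_weight :: "(int \<times> int \<Rightarrow> real) \<Rightarrow> real \<Rightarrow> int \<times> int \<Rightarrow> ennreal" where
  "step_weight J \<epsilon> z = (if z = 0 then 0 else ennreal (\<epsilon> * J z))"

fun walk_kernel :: "(int \<times> int \<Rightarrow> real) \<Rightarrow> real \<Rightarrow> nat \<Rightarrow> int \<times> int \<Rightarrow> ennreal" where
  "walk_kernel J \<epsilon> 0 z = (if z = 0 then 1 else 0)"
| "walk_kernel J \<epsilon> (Suc n) z = nn_sum (\<lambda>u. step_weight J \<epsilon> u * walk_kernel J \<epsilon> n (z - u))"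

lemma walk_kernel_1: "walk_kernel J \<epsilon> (Suc 0) z = step_weight J \<epsilon> z"
  by (simp, subst nn_sum_single[of z]) auto

lemma nn_sum_step_weight_le:
  assumes "\<And>x. J x \<ge> 0" "(J has_sum 1) UNIV" "\<epsilon> \<ge> 0"
  shows "nn_sum (step_weight J \<epsilon>) \<le> ennreal \<epsilon>"
proof -
  have "nn_sum (step_weight J \<epsilon>) \<le> nn_sum (\<lambda>z. ennreal \<epsilon> * ennreal (J z))"
    using assms by (intro nn_sum_mono) (auto simp: step_weight_def ennreal_mult)
  also have "\<dots> = ennreal \<epsilon>"
    by (simp add: nn_sum_cmult nn_sum_has_sum[OF assms(1,2)])
  finally show ?thesis .
qed

lemma nn_sum_walk_kernel_le:
  assumes "\<And>x. J x \<ge> 0" "(J has_sum 1) UNIV" "\<epsilon> \<ge> 0"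
  shows "nn_sum (walk_kernel J \<epsilon> n) \<le> ennreal (\<epsilon> ^ n)"
proof (induction n)
  case 0
  show ?case by (subst nn_sum_single[of 0]) auto
next
  case (Suc n)
  have "nn_sum (walk_kernel J \<epsilon> (Suc n))
      = nn_sum (\<lambda>z. nn_sum (\<lambda>u. step_weight J \<epsilon> u * walk_kernel J \<epsilon> n (z - u)))"
    by (rule arg_cong[where f=nn_sum]) (simp add: fun_eq_iff)
  also have "\<dots> = nn_sum (\<lambda>u. nn_sum (\<lambda>z. step_weight J \<epsilon> u * walk_kernel J \<epsilon> n (z - u)))"
    by (rule nn_sum_swap)
  also have "\<dots> = nn_sum (\<lambda>u. nn_sum (walk_kernel J \<epsilon> n) * step_weight J \<epsilon> u)"
  proof -
    have "nn_sum (\<lambda>z. walk_kernel J \<epsilon> n (z - u)) = nn_sum (walk_kernel J \<epsilon> n)" for u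
      using nn_sum_shift[of "walk_kernel J \<epsilon> n" "- u"] by simp
    then show ?thesis by (simp add: nn_sum_cmult mult.commute)
  qed
  also have "\<dots> \<le> ennreal (\<epsilon> ^ n) * ennreal \<epsilon>"
    unfolding nn_sum_cmult by (intro mult_mono Suc nn_sum_step_weight_le assms) auto
  also have "\<dots> = ennreal (\<epsilon> ^ Suc n)"
    using assms(3) by (simp add: ennreal_mult[symmetric] mult.commute)
  finally show ?case .
qed

text \<open>In the convolution \<open>f * g\<close> at \<open>z\<close>, one of the two arguments \<open>u\<close>, \<open>z - u\<close> has
  \<open>bracket\<close> at least half of \<open>bracket z\<close>; there the polynomial decay bound is used,
  and the total mass for the other factor.\<close>
lemma nn_sum_conv_le:
  fixes f g :: "int \<times> int \<Rightarrow> ennreal"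
  assumes "\<alpha> \<ge> 0" "a \<ge> 0" "b \<ge> 0" "F \<ge> 0" "G \<ge> 0"
    and f: "\<And>z. f z \<le> ennreal (a * bracket z powr (-\<alpha>))" "nn_sum f \<le> ennreal F"
    and g: "\<And>z. g z \<le> ennreal (b * bracket z powr (-\<alpha>))" "nn_sum g \<le> ennreal G"
  shows "nn_sum (\<lambda>u. f u * g (z - u)) \<le> ennreal (2 powr \<alpha> * (a * G + b * F) * bracket z powr (-\<alpha>))"
proof -
  define c where "c = 2 powr \<alpha> * bracket z powr (-\<alpha>)"
  have "f u * g (z - u) \<le> ennreal (a * c) * g (z - u) + ennreal (b * c) * f u" for u
  proof (cases "bracket z \<le> 2 * bracket u")
    case True
    have "bracket u powr (-\<alpha>) \<le> c"
      using bracket_powr_le_half[OF assms(1) True] by (simp add: c_def)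
    then have "f u \<le> ennreal (a * c)"
      using f(1)[of u] assms(2) by (auto intro: order_trans ennreal_leI mult_left_mono)
    then have "f u * g (z - u) \<le> ennreal (a * c) * g (z - u)"
      by (rule mult_right_mono) simp
    then show ?thesis by (simp add: add_increasing2)
  next
    case False
    then have "bracket z \<le> 2 * bracket (z - u)" using bracket_triangle[of z u] by auto
    then have "bracket (z - u) powr (-\<alpha>) \<le> c"
      using bracket_powr_le_half[OF assms(1)] by (simp add: c_def)
    then have "g (z - u) \<le> ennreal (b * c)"
      using g(1)[of "z - u"] assms(3) by (auto intro: order_trans ennreal_leI mult_left_mono)
    then have "f u * g (z - u) \<le> ennreal (b * c) * f u"
      by (subst mult.commute) (rule mult_right_mono, simp_all)
    then show ?thesis by (simp add: add_increasing)
  qed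
  then have "nn_sum (\<lambda>u. f u * g (z - u))
      \<le> nn_sum (\<lambda>u. ennreal (a * c) * g (z - u) + ennreal (b * c) * f u)"
    by (rule nn_sum_mono)
  also have "\<dots> = ennreal (a * c) * nn_sum g + ennreal (b * c) * nn_sum f"
    by (simp add: nn_sum_add nn_sum_cmult nn_sum_reflect[of g z])
  also have "\<dots> \<le> ennreal (a * c) * ennreal G + ennreal (b * c) * ennreal F"
    using f(2) g(2) by (intro add_mono mult_left_mono) auto
  also have "\<dots> = ennreal (2 powr \<alpha> * (a * G + b * F) * bracket z powr (-\<alpha>))"
    using assms by (simp add: c_def ennreal_mult[symmetric] ennreal_plus[symmetric] algebra_simps
        del: ennreal_plus)
  finally show ?thesis .
qed

lemma step_weight_le:
  assumes "\<epsilon> \<ge> 0" "\<And>x. x \<noteq> 0 \<Longrightarrow> J x \<le> Jc * real_of_int (l1 x) powr (- \<alpha>)"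
  shows "step_weight J \<epsilon> z \<le> ennreal (\<epsilon> * Jc * bracket z powr (-\<alpha>))"
proof (cases "z = 0")
  case False
  then have "\<epsilon> * J z \<le> \<epsilon> * (Jc * bracket z powr (-\<alpha>))"
    using assms by (simp add: bracket_eq_l1 mult_left_mono)
  then show ?thesis using False by (simp add: step_weight_def ennreal_leI mult.assoc)
qed (simp add: step_weight_def)

lemma walk_kernel_coefficient_step:
  fixes p \<epsilon> Jc :: real
  assumes "p \<ge> 1" "\<epsilon> \<ge> 0" "Jc \<ge> 0"
  shows "p * (\<epsilon> * Jc * \<epsilon> ^ Suc n + Jc * real (Suc n) * (p * \<epsilon>) ^ Suc n * \<epsilon>)
    \<le> Jc * real (Suc (Suc n)) * (p * \<epsilon>) ^ Suc (Suc n)"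
proof -
  have "p * \<epsilon> ^ Suc (Suc n) \<le> p ^ Suc (Suc n) * \<epsilon> ^ Suc (Suc n)"
    using assms power_increasing[of 1 "Suc (Suc n)" p] by (intro mult_right_mono) auto
  then show ?thesis
    using assms by (simp add: algebra_simps power_mult_distrib mult_left_mono)
qed

lemma walk_kernel_le:
  assumes J0: "\<And>x. J x \<ge> 0" and J_sum: "(J has_sum 1) UNIV" and "\<epsilon> \<ge> 0"
    and "\<alpha> \<ge> 0" and "Jc \<ge> 0" and A1: "\<And>x. x \<noteq> 0 \<Longrightarrow> J x \<le> Jc * real_of_int (l1 x) powr (- \<alpha>)"
  shows "walk_kernel J \<epsilon> (Suc n) z
    \<le> ennreal (Jc * real (Suc n) * (2 powr \<alpha> * \<epsilon>) ^ Suc n * bracket z powr (-\<alpha>))"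
proof -
  let ?p = "2 powr \<alpha> :: real"
  have p: "?p \<ge> 1" using \<open>\<alpha> \<ge> 0\<close> by (intro ge_one_powr_ge_zero) auto
  show ?thesis
  proof (induction n arbitrary: z)
    case 0
    have "\<epsilon> * Jc * 1 \<le> \<epsilon> * Jc * ?p"
      using p assms by (intro mult_left_mono) auto
    then have le: "\<epsilon> * Jc * bracket z powr (-\<alpha>) \<le> Jc * (?p * \<epsilon>) * bracket z powr (-\<alpha>)"
      by (intro mult_right_mono) (simp_all add: mult_ac)
    have "step_weight J \<epsilon> z \<le> ennreal (\<epsilon> * Jc * bracket z powr (-\<alpha>))"
      by (rule step_weight_le[OF \<open>\<epsilon> \<ge> 0\<close> A1])
    also have "\<dots> \<le> ennreal (Jc * (?p * \<epsilon>) * bracket z powr (-\<alpha>))"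
      using le by (rule ennreal_leI)
    finally show ?case unfolding walk_kernel_1 by simp
  next
    case (Suc n)
    let ?b = "Jc * real (Suc n) * (?p * \<epsilon>) ^ Suc n"
    have "walk_kernel J \<epsilon> (Suc (Suc n)) z
        \<le> ennreal (?p * (\<epsilon> * Jc * \<epsilon> ^ Suc n + ?b * \<epsilon>) * bracket z powr (-\<alpha>))"
      unfolding walk_kernel.simps(2)[of J \<epsilon> "Suc n"]
      using assms p
      by (intro nn_sum_conv_le step_weight_le nn_sum_step_weight_le nn_sum_walk_kernel_le Suc) auto
    also have "\<dots> \<le> ennreal (Jc * real (Suc (Suc n)) * (?p * \<epsilon>) ^ Suc (Suc n) * bracket z powr (-\<alpha>))"
      using walk_kernel_coefficient_step[OF p \<open>\<epsilon> \<ge> 0\<close> \<open>Jc \<ge> 0\<close>, of n]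
      by (intro ennreal_leI mult_right_mono) simp_all
    finally show ?case .
  qed
qed

lemma suminf_walk_kernel_le:
  assumes "\<And>x. J x \<ge> 0" "(J has_sum 1) UNIV" "\<epsilon> \<ge> 0" "2 powr \<alpha> * \<epsilon> \<le> 1/4"
    and "\<alpha> \<ge> 0" "Jc \<ge> 0" "\<And>x. x \<noteq> 0 \<Longrightarrow> J x \<le> Jc * real_of_int (l1 x) powr (- \<alpha>)"
    and "z \<noteq> 0"
  shows "(\<Sum>n. walk_kernel J \<epsilon> n z) \<le> ennreal (Jc * bracket z powr (-\<alpha>))"
proof -
  define c where "c = Jc * bracket z powr (-\<alpha>)"
  have "walk_kernel J \<epsilon> (Suc n) z \<le> ennreal (c / 2 * (1/2) ^ n)" for n
  proof -
    \<comment> \<open>\<open>m q\<^sup>m \<le> (1/2)\<^sup>m\<close> for \<open>q \<le> 1/4\<close>, since \<open>m \<le> 2\<^sup>m\<close>\<close>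
    have "real (Suc n) \<le> 2 ^ Suc n"
      using less_exp[of "Suc n"] of_nat_le_iff[of "Suc n" "2 ^ Suc n"] by simp
    then have "real (Suc n) * (2 powr \<alpha> * \<epsilon>) ^ Suc n \<le> 2 ^ Suc n * (1/4) ^ Suc n"
      using assms by (intro mult_mono power_mono) auto
    also have "\<dots> = (1/2) ^ Suc n" by (simp add: power_mult_distrib[symmetric])
    finally have m: "real (Suc n) * (2 powr \<alpha> * \<epsilon>) ^ Suc n \<le> (1/2) ^ Suc n" .
    have "walk_kernel J \<epsilon> (Suc n) z
        \<le> ennreal (Jc * real (Suc n) * (2 powr \<alpha> * \<epsilon>) ^ Suc n * bracket z powr (-\<alpha>))"
      by (rule walk_kernel_le[OF assms(1-3,5-7)])
    also have "\<dots> \<le> ennreal (Jc * (1/2) ^ Suc n * bracket z powr (-\<alpha>))"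
      using m assms by (intro ennreal_leI mult_right_mono) (simp_all add: mult.assoc mult_left_mono)
    also have "\<dots> = ennreal (c / 2 * (1/2) ^ n)"
      by (simp add: c_def mult_ac)
    finally show ?thesis .
  qed
  then have "(\<Sum>n. walk_kernel J \<epsilon> (Suc n) z) \<le> (\<Sum>n. ennreal (c / 2 * (1/2) ^ n))"
    by (intro suminf_le) auto
  also have "\<dots> = ennreal (\<Sum>n. c / 2 * (1/2) ^ n)"
    using assms by (intro suminf_ennreal2 summable_mult summable_geometric) (auto simp: c_def)
  also have "(\<Sum>n. c / 2 * (1/2) ^ n) = c"
    using sums_mult[OF geometric_sums[of "1/2::real"], of "c / 2"] by (simp add: sums_iff)
  finally show ?thesis
    using suminf_offset[of "\<lambda>n. walk_kernel J \<epsilon> n z" 1] \<open>z \<noteq> 0\<close> by (simp add: c_def)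
qed

fun path_edges :: "vertex \<Rightarrow> vertex list \<Rightarrow> edge set" where
  "path_edges x [] = {}"
| "path_edges x (y # ys) = insert {x, y} (path_edges y ys)"

fun path_weight :: "(int \<times> int \<Rightarrow> real) \<Rightarrow> real \<Rightarrow> vertex \<Rightarrow> vertex list \<Rightarrow> ennreal" where
  "path_weight J \<epsilon> x [] = 1"
| "path_weight J \<epsilon> x (y # ys) = step_weight J \<epsilon> (y - x) * path_weight J \<epsilon> y ys"

lemma path_edges_subset: "e \<in> path_edges x xs \<Longrightarrow> e \<subseteq> set (x # xs)"
  by (induction x xs rule: path_edges.induct) auto

lemma finite_path_edges: "finite (path_edges x xs)"
  by (induction x xs rule: path_edges.induct) auto

lemma path_edges_subset_edges: "distinct (x # xs) \<Longrightarrow> path_edges x xs \<subseteq> edges"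
  by (induction x xs rule: path_edges.induct) (auto simp: edges_def)

lemma edgeJ_doubleton:
  assumes sym: "\<And>x. J x = J (- x)" and "a \<noteq> b"
  shows "edgeJ J {a, b} = J (a - b)"
  unfolding edgeJ_def
proof (rule the_equality)
  fix r assume "\<exists>x y. {a, b} = {x, y} \<and> x \<noteq> y \<and> r = J (x - y)"
  then obtain x y where "{a, b} = {x, y}" "r = J (x - y)" by blast
  then show "r = J (a - b)"
    using sym[of "a - b"] by (auto simp: doubleton_eq_iff minus_diff_eq)
qed (use assms in blast)

definition edge_law :: "(int \<times> int \<Rightarrow> real) \<Rightarrow> real \<Rightarrow> edge \<Rightarrow> bool measure" where
  "edge_law J \<epsilon> e = measure_pmf (bernoulli_pmf (\<epsilon> * edgeJ J e))"

lemma perc_eq_PiM: "perc J \<epsilon> = PiM edges (edge_law J \<epsilon>)"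
  unfolding perc_def edge_law_def ..

lemma open_path_event_eq_prod_emb:
  "{A \<in> space (perc J \<epsilon>). \<forall>e\<in>path_edges x xs. A e}
    = prod_emb edges (edge_law J \<epsilon>) (path_edges x xs) (\<Pi>\<^sub>E e\<in>path_edges x xs. {True})"
  unfolding perc_def edge_law_def[symmetric]
  by (auto simp: prod_emb_iff space_PiM PiE_iff edge_law_def fun_eq_iff) metis

lemma sets_open_path_event:
  "distinct (x # xs) \<Longrightarrow> {A \<in> space (perc J \<epsilon>). \<forall>e\<in>path_edges x xs. A e} \<in> sets (perc J \<epsilon>)"
  unfolding open_path_event_eq_prod_emb unfolding perc_eq_PiM
  by (rule sets_PiM_I) (auto simp: finite_path_edges path_edges_subset_edges edge_law_def)

lemma emeasure_open_path_event:
  assumes sym: "\<And>x. J x = J (- x)" and J0: "\<And>x. J x \<ge> 0" and J_sum: "(J has_sum 1) UNIV"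
    and "0 \<le> \<epsilon>" "\<epsilon> \<le> 1" and distinct: "distinct (x # xs)"
  shows "emeasure (perc J \<epsilon>) {A \<in> space (perc J \<epsilon>). \<forall>e\<in>path_edges x xs. A e} = path_weight J \<epsilon> x xs"
proof -
  have "emeasure (perc J \<epsilon>) {A \<in> space (perc J \<epsilon>). \<forall>e\<in>path_edges x xs. A e}
      = (\<Prod>e\<in>path_edges x xs. emeasure (edge_law J \<epsilon> e) {True})"
    unfolding open_path_event_eq_prod_emb unfolding perc_eq_PiM
    by (rule emeasure_PiM_emb)
      (auto simp: finite_path_edges path_edges_subset_edges[OF distinct] edge_law_def
        prob_space_measure_pmf)
  also have "\<dots> = path_weight J \<epsilon> x xs"
    using distinct
  proof (induction x xs rule: path_edges.induct)
    case (2 x y ys)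
    have "x \<noteq> y" "{x, y} \<notin> path_edges y ys"
      using 2(2) path_edges_subset[of "{x, y}" y ys] by auto
    moreover have "0 \<le> \<epsilon> * J (x - y)" "\<epsilon> * J (x - y) \<le> 1"
      using J0[of "x - y"] has_sum_term_le[OF J0 J_sum, of "x - y"] assms(4,5)
      by (auto intro: mult_le_one)
    ultimately have "emeasure (edge_law J \<epsilon> {x, y}) {True} = step_weight J \<epsilon> (y - x)"
      using sym[of "x - y"]
      by (simp add: edge_law_def emeasure_pmf_single edgeJ_doubleton[of J, OF sym] step_weight_def
          minus_diff_eq)
    then show ?case
      using 2 \<open>{x, y} \<notin> path_edges y ys\<close> by (simp add: finite_path_edges)
  qed simp
  finally show ?thesis .
qed

lemma nn_sum_path_weight_length:
  "nn_sum (\<lambda>xs. if length xs = n \<and> last (v # xs) = x then path_weight J \<epsilon> v xs else 0)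
    = walk_kernel J \<epsilon> n (x - v)"
proof (induction n arbitrary: v)
  case 0
  show ?case by (subst nn_sum_single[of "[]"]) auto
next
  case (Suc n)
  have "nn_sum (\<lambda>xs. if length xs = Suc n \<and> last (v # xs) = x then path_weight J \<epsilon> v xs else 0)
      = nn_sum (\<lambda>y. nn_sum (\<lambda>ys. step_weight J \<epsilon> (y - v) *
          (if length ys = n \<and> last (y # ys) = x then path_weight J \<epsilon> y ys else 0)))"
    by (subst nn_sum_Cons) (auto intro!: arg_cong[where f=nn_sum] simp: fun_eq_iff)
  also have "\<dots> = nn_sum (\<lambda>y. step_weight J \<epsilon> (y - v) * nn_sum (\<lambda>ys.
          if length ys = n \<and> last (y # ys) = x then path_weight J \<epsilon> y ys else 0))"
    by (simp only: nn_sum_cmult)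
  also have "\<dots> = nn_sum (\<lambda>y. step_weight J \<epsilon> (y - v) * walk_kernel J \<epsilon> n (x - y))"
    by (simp only: Suc.IH)
  also have "\<dots> = walk_kernel J \<epsilon> (Suc n) (x - v)"
    using nn_sum_shift[of "\<lambda>y. step_weight J \<epsilon> (y - v) * walk_kernel J \<epsilon> n (x - y)" v]
    by (simp add: algebra_simps)
  finally show ?case .
qed

lemma nn_sum_path_weight:
  "nn_sum (\<lambda>xs. if last (v # xs) = x then path_weight J \<epsilon> v xs else 0) = (\<Sum>n. walk_kernel J \<epsilon> n (x - v))"
proof -
  have "(if last (v # xs) = x then path_weight J \<epsilon> v xs else 0)
      = (\<Sum>n. if length xs = n \<and> last (v # xs) = x then path_weight J \<epsilon> v xs else 0)" for xs
    by (subst suminf_finite[of "{length xs}"]) auto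
  then have "nn_sum (\<lambda>xs. if last (v # xs) = x then path_weight J \<epsilon> v xs else 0)
      = nn_sum (\<lambda>xs. \<Sum>n. if length xs = n \<and> last (v # xs) = x then path_weight J \<epsilon> v xs else 0)"
    by simp
  also have "\<dots> = (\<Sum>n. walk_kernel J \<epsilon> n (x - v))"
    by (simp only: nn_sum_suminf nn_sum_path_weight_length)
  finally show ?thesis .
qed

lemma connected_in_imp_open_path:
  assumes "connected_in A v x"
  obtains xs where "distinct (v # xs)" "last (v # xs) = x" "\<forall>e\<in>path_edges v xs. A e"
proof -
  let ?r = "\<lambda>a b. {a, b} \<in> edges \<and> A {a, b}"
  have open_edges: "last (u # us) = y \<and> (\<forall>e\<in>path_edges u us. A e)"
    if "rtrancl_path ?r u us y" for u us y
    using that by induction auto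
  have "?r\<^sup>*\<^sup>* v x" using assms unfolding connected_in_def
    by (simp add: rtranclp_rtrancl_eq)
  then obtain xs where "rtrancl_path ?r v xs x" by (auto simp: rtranclp_eq_rtrancl_path)
  then obtain xs' where "rtrancl_path ?r v xs' x" "distinct (v # xs')"
    by (rule rtrancl_path_distinct)
  then show ?thesis using open_edges that by blast
qed

lemma Sup_enat_mem:
  fixes S :: "enat set"
  assumes "S \<noteq> {}" "Sup S = enat m"
  shows "enat m \<in> S"
proof (cases "finite S")
  case True
  then show ?thesis using assms Max_in[OF True] by (simp add: Sup_enat_def)
qed (use assms in \<open>simp add: Sup_enat_def\<close>)

lemma mA_eq_imp_open_path:
  assumes "mA A x = enat (nat k)" "k \<ge> 0"
  obtains v xs where "linf v = k" "distinct (v # xs)" "last (v # xs) = x" "\<forall>e\<in>path_edges v xs. A e"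
proof -
  let ?S = "(\<lambda>v. enat (nat (linf v))) ` {v. connected_in A v x}"
  have "connected_in A x x" by (simp add: connected_in_def)
  then have "?S \<noteq> {}" by blast
  then have "enat (nat k) \<in> ?S"
    using Sup_enat_mem assms(1) by (simp add: mA_def)
  then obtain v where v: "connected_in A v x" "nat (linf v) = nat k" by auto
  moreover have "linf v \<ge> 0" unfolding linf_def by simp
  ultimately have "linf v = k" using assms(2) by simp
  moreover obtain xs where "distinct (v # xs)" "last (v # xs) = x" "\<forall>e\<in>path_edges v xs. A e"
    using connected_in_imp_open_path[OF v(1)] .
  ultimately show ?thesis using that by blast
qed

lemma emeasure_mA_eq_le:
  assumes "\<And>x. J x = J (- x)" "\<And>x. J x \<ge> 0" "(J has_sum 1) UNIV" "0 \<le> \<epsilon>" "\<epsilon> \<le> 1" "k \<ge> 0"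
  shows "emeasure (perc J \<epsilon>) {A \<in> space (perc J \<epsilon>). mA A x = enat (nat k)}
    \<le> nn_sum (\<lambda>v. if linf v = k then \<Sum>n. walk_kernel J \<epsilon> n (x - v) else 0)"
proof -
  let ?M = "perc J \<epsilon>"
  define I where "I = {(v, xs). linf v = k \<and> distinct (v # xs) \<and> last (v # xs) = x}"
  define open_path where "open_path p = {A \<in> space ?M. \<forall>e\<in>path_edges (fst p) (snd p). A e}" for p
  have sets: "open_path p \<in> sets ?M" if "p \<in> I" for p
    using that unfolding I_def open_path_def by (auto intro: sets_open_path_event)
  have "{A \<in> space ?M. mA A x = enat (nat k)} \<subseteq> (\<Union>p\<in>I. open_path p)"
  proof
    fix A assume A: "A \<in> {A \<in> space ?M. mA A x = enat (nat k)}"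
    then obtain v xs where "linf v = k" "distinct (v # xs)" "last (v # xs) = x"
      "\<forall>e\<in>path_edges v xs. A e"
      using \<open>k \<ge> 0\<close> by (auto elim: mA_eq_imp_open_path)
    then show "A \<in> (\<Union>p\<in>I. open_path p)"
      using A unfolding I_def open_path_def by (intro UN_I[of "(v, xs)"]) auto
  qed
  then have "emeasure ?M {A \<in> space ?M. mA A x = enat (nat k)} \<le> emeasure ?M (\<Union>p\<in>I. open_path p)"
    using sets by (intro emeasure_mono sets.countable_UN') auto
  also have "\<dots> \<le> (\<integral>\<^sup>+p. emeasure ?M (open_path p) \<partial>count_space I)"
    using sets by (intro emeasure_UN_countable_le) auto
  also have "\<dots> = (\<integral>\<^sup>+p. path_weight J \<epsilon> (fst p) (snd p) \<partial>count_space I)"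
    using assms unfolding open_path_def
    by (intro nn_integral_cong emeasure_open_path_event) (auto simp: I_def)
  also have "\<dots> \<le> nn_sum (\<lambda>(v, xs). if linf v = k then
      (if last (v # xs) = x then path_weight J \<epsilon> v xs else 0) else 0)"
    unfolding nn_sum_indicator[symmetric]
    by (intro nn_sum_mono) (auto simp: I_def split: split_indicator)
  also have "\<dots> = nn_sum (\<lambda>v. if linf v = k then
      nn_sum (\<lambda>xs. if last (v # xs) = x then path_weight J \<epsilon> v xs else 0) else 0)"
    by (subst nn_sum_pair, rule arg_cong[where f=nn_sum], rule ext) (simp add: nn_sum_def)
  also have "\<dots> = nn_sum (\<lambda>v. if linf v = k then \<Sum>n. walk_kernel J \<epsilon> n (x - v) else 0)"
    by (simp only: nn_sum_path_weight)
  finally show ?thesis .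
qed

lemma emeasure_mA_eq_le_powr:
  assumes "\<And>x. J x = J (- x)" "\<And>x. J x \<ge> 0" "(J has_sum 1) UNIV"
    and "\<alpha> > 1" "Jc \<ge> 0" "\<And>x. x \<noteq> 0 \<Longrightarrow> J x \<le> Jc * real_of_int (l1 x) powr (- \<alpha>)"
    and "0 \<le> \<epsilon>" "\<epsilon> \<le> 1" "2 powr \<alpha> * \<epsilon> \<le> 1/4" and k: "linf x < k"
  shows "emeasure (perc J \<epsilon>) {A \<in> space (perc J \<epsilon>). mA A x = enat (nat k)}
    \<le> ennreal (8 * \<alpha> / (\<alpha> - 1) * Jc * real_of_int (k - linf x) powr (1 - \<alpha>))"
proof -
  have "linf x \<ge> 0" by (simp add: linf_def)
  then have "k \<ge> 0" using k by simp
  then have "emeasure (perc J \<epsilon>) {A \<in> space (perc J \<epsilon>). mA A x = enat (nat k)}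
      \<le> nn_sum (\<lambda>v. if linf v = k then \<Sum>n. walk_kernel J \<epsilon> n (x - v) else 0)"
    using assms by (intro emeasure_mA_eq_le) auto
  also have "\<dots> \<le> nn_sum (\<lambda>v. ennreal Jc * (if linf v = k then ennreal (bracket (x - v) powr (-\<alpha>)) else 0))"
    using assms by (intro nn_sum_mono)
      (auto simp: ennreal_mult[symmetric] intro!: suminf_walk_kernel_le)
  also have "\<dots> \<le> ennreal Jc * ennreal (8 * \<alpha> / (\<alpha> - 1) * real_of_int (k - linf x) powr (1 - \<alpha>))"
    unfolding nn_sum_cmult using assms by (intro mult_left_mono nn_sum_sphere_bracket_powr_le) auto
  finally show ?thesis
    using assms by (simp add: ennreal_mult[symmetric] mult_ac)
qed

theorem propositionA2:
  fixes J :: "int \<times> int \<Rightarrow> real" and \<alpha> Jc :: real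
  assumes J_sym: "\<And>x. J x = J (- x)"
    and J_nonneg: "\<And>x. J x \<ge> 0"
    and J_sum: "(J has_sum 1) UNIV"
    and alpha: "\<alpha> > 4"
    and Jc: "Jc \<ge> 0"
    and A1: "\<And>x. x \<noteq> 0 \<Longrightarrow> J x \<le> Jc * real_of_int (l1 x) powr (- \<alpha>)"
  shows "\<exists>\<epsilon>0>0. \<forall>\<epsilon>. 0 < \<epsilon> \<and> \<epsilon> \<le> 1 \<and> \<epsilon> \<le> \<epsilon>0 \<longrightarrow>
           (\<exists>C1. \<forall>x :: int \<times> int. \<forall>k :: int. k > linf x \<longrightarrow>
              measure (perc J \<epsilon>) {A \<in> space (perc J \<epsilon>). mA A x = enat (nat k)}
                \<le> C1 / real_of_int (k - linf x) powr (\<alpha> - 1))"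
proof (rule exI[of _ "1 / (4 * 2 powr \<alpha>)"], intro conjI allI impI)
  fix \<epsilon> :: real
  assume \<epsilon>: "0 < \<epsilon> \<and> \<epsilon> \<le> 1 \<and> \<epsilon> \<le> 1 / (4 * 2 powr \<alpha>)"
  then have "2 powr \<alpha> * \<epsilon> \<le> 1/4" by (simp add: field_simps)
  show "\<exists>C1. \<forall>x k. linf x < k \<longrightarrow>
      measure (perc J \<epsilon>) {A \<in> space (perc J \<epsilon>). mA A x = enat (nat k)}
        \<le> C1 / real_of_int (k - linf x) powr (\<alpha> - 1)"
  proof (intro exI[of _ "8 * \<alpha> / (\<alpha> - 1) * Jc"] allI impI)
    fix x :: "int \<times> int" and k :: int
    assume k: "linf x < k"
    have "real_of_int (k - linf x) powr (1 - \<alpha>) = 1 / real_of_int (k - linf x) powr (\<alpha> - 1)"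
      using k by (simp add: powr_minus_divide[symmetric] powr_minus)
    then show "measure (perc J \<epsilon>) {A \<in> space (perc J \<epsilon>). mA A x = enat (nat k)}
        \<le> 8 * \<alpha> / (\<alpha> - 1) * Jc / real_of_int (k - linf x) powr (\<alpha> - 1)"
      using emeasure_mA_eq_le_powr[OF J_sym J_nonneg J_sum _ Jc A1, of \<epsilon> x k] alpha Jc \<epsilon>
        \<open>2 powr \<alpha> * \<epsilon> \<le> 1/4\<close> k
      unfolding measure_def by (intro enn2real_leI) auto
  qed
qed simp

end
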